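(* Suppose the support of $\mathbb F$ is $(0,1)$. Among all mechanisms $x_i$ for agent $i$ satisfying (P) and the ex-post incentive constraint (EPIC): $\mathbb E[\omega x_i(s_i,s_{-i})\mid s_i,s_{-i}]\ge\mathbb E[\omega x_i(\hat s_i,s_{-i})\mid s_i,s_{-i}]$ for all $s_i,\hat s_i,s_{-i}$, the efficient mechanism $x_i(s_i,s_{-i})=\mathbb I\{\mathrm{LR}(s_i,s_{-i})\ge1\}$ uniquely (up to a measure-zero set) maximizes $\mathbb E[x_i(s)]$.
   Context: Setup. A state $\omega\in\{-1,+1\}$ is drawn with probability $1/2$ each. There are $n\ge 2$ agents. Conditional on $\omega$, signals $s_1,\dots,s_n$ are i.i.d. with distribution $\mathbb F_\omega$ on $[0,1]$, normalized so that $s_i=\mathbb P[\omega=+1\mid s_i]$. $\mathbb F_{-1},\mathbb F_{+1}$ are mutually absolutely continuous with densities; $\mathbb F=(\mathbb F_{-1}+\mathbb F_{+1})/2$ has a density. $\mathrm{LR}(s_i,s_{-i})=\prod_k\frac{s_k}{1-s_k}$ is the likelihood ratio of state $+1$ vs $-1$ given all signals. A mechanism for agent $i$ is a measurable $x_i$ from signal profiles to $[0,1]$, the probability agent $i$ gets a good worth $\omega$ to her (else payoff $0$). (P): $\mathbb E[\omega x_i(s_i,s_{-i})\mid s_i]\ge0$ for all $s_i$. *)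

theory Defs
  imports "HOL-Probability.Probability"
begin

text \<open>Signals live in [0,1]; the signal distribution in state omega is given by a
  density f (w.r.t. Lebesgue measure).  fp is the density of F_{+1}, fm the density of F_{-1}.
  Agents are indexed by {..<n}; a signal profile is an (extensional) function nat => real.\<close>

definition sigM :: "(real \<Rightarrow> real) \<Rightarrow> real measure" where
  "sigM f = density lborel (\<lambda>t. ennreal (f t))"

text \<open>Joint law of the profile conditional on the state (signals i.i.d. given the state).\<close>
definition profM :: "nat \<Rightarrow> (real \<Rightarrow> real) \<Rightarrow> (nat \<Rightarrow> real) measure" where
  "profM n f = PiM {..<n} (\<lambda>_. sigM f)"

definition LR :: "nat \<Rightarrow> (nat \<Rightarrow> real) \<Rightarrow> real" where
  "LR n s = (\<Prod>k<n. s k / (1 - s k))"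

text \<open>P[omega = +1 | s] = LR/(1+LR) (prior 1/2).\<close>
definition post_full :: "nat \<Rightarrow> (nat \<Rightarrow> real) \<Rightarrow> real" where
  "post_full n s = LR n s / (1 + LR n s)"

text \<open>E[omega * y | s] for a quantity y that is a function of the signal profile.\<close>
definition cond_payoff_full :: "nat \<Rightarrow> (nat \<Rightarrow> real) \<Rightarrow> real \<Rightarrow> real" where
  "cond_payoff_full n s y = post_full n s * y - (1 - post_full n s) * y"

text \<open>E[omega x(s_i,s_{-i}) | s_i = t]: with the normalization P[omega=+1 | s_i = t] = t
  and conditional independence, this is t E[x(t,s_{-i}) | omega=+1] - (1-t) E[x(t,s_{-i}) | omega=-1].
  Integrating x (s(i:=t)) over the full product measure integrates over s_{-i}.\<close>
definition interim_payoff ::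
  "(real \<Rightarrow> real) \<Rightarrow> (real \<Rightarrow> real) \<Rightarrow> nat \<Rightarrow> ((nat \<Rightarrow> real) \<Rightarrow> real) \<Rightarrow> nat \<Rightarrow> real \<Rightarrow> real" where
  "interim_payoff fp fm n x i t =
     t * (\<integral>s. x (s(i := t)) \<partial>profM n fp) - (1 - t) * (\<integral>s. x (s(i := t)) \<partial>profM n fm)"

definition ex_ante_alloc ::
  "(real \<Rightarrow> real) \<Rightarrow> (real \<Rightarrow> real) \<Rightarrow> nat \<Rightarrow> ((nat \<Rightarrow> real) \<Rightarrow> real) \<Rightarrow> real" where
  "ex_ante_alloc fp fm n x = (1/2) * (\<integral>s. x s \<partial>profM n fp) + (1/2) * (\<integral>s. x s \<partial>profM n fm)"

definition is_mechanism :: "nat \<Rightarrow> ((nat \<Rightarrow> real) \<Rightarrow> real) \<Rightarrow> bool" where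
  "is_mechanism n x \<longleftrightarrow> x \<in> borel_measurable (PiM {..<n} (\<lambda>_. lborel)) \<and> (\<forall>s. 0 \<le> x s \<and> x s \<le> 1)"

definition participation ::
  "(real \<Rightarrow> real) \<Rightarrow> (real \<Rightarrow> real) \<Rightarrow> nat \<Rightarrow> ((nat \<Rightarrow> real) \<Rightarrow> real) \<Rightarrow> nat \<Rightarrow> bool" where
  "participation fp fm n x i \<longleftrightarrow> (\<forall>t\<in>{0<..<1}. interim_payoff fp fm n x i t \<ge> 0)"

definition EPIC :: "nat \<Rightarrow> ((nat \<Rightarrow> real) \<Rightarrow> real) \<Rightarrow> nat \<Rightarrow> bool" where
  "EPIC n x i \<longleftrightarrow> (\<forall>s \<in> {..<n} \<rightarrow>\<^sub>E {0<..<1}. \<forall>t \<in> {0<..<1}.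
      cond_payoff_full n s (x s) \<ge> cond_payoff_full n s (x (s(i := t))))"

definition eff_mech :: "nat \<Rightarrow> (nat \<Rightarrow> real) \<Rightarrow> real" where
  "eff_mech n s = (if LR n s \<ge> 1 then 1 else 0)"

end

theory Submission
  imports Defs
begin

(* Write c(s) = (LR s - 1) / (LR s + 1), so that E[omega y | s] = c(s) y and c(s) < 0 exactly
   where LR s < 1.  There EPIC forces x(s) <= x(t, s_{-i}) for every report t, while (P) at
   signal t gives (1 - t) E_{-1}[x(t, s_{-i})] <= t E_{+1}[x(t, s_{-i})] <= t.  Hence
   E_{-1}[x(s) 1{LR s < 1}] <= t / (1 - t) for all t > 0, i.e. x <= 1{LR >= 1} almost surely
   under F_{-1}, and also under F_{+1}, which has density prod_k s_k / (1 - s_k) with respect to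
   F_{-1}.  The efficient mechanism satisfies EPIC pointwise, and (P) pointwise in s_{-i}: it
   allocates at report t only where t prod_{k ~= i} s_k / (1 - s_k) >= 1 - t.  Comparing
   expectations gives optimality, and equality of expectations forces x = 1{LR >= 1} a.s. *)

lemma prod_indicator_PiE:
  assumes "finite I" "s \<in> extensional I"
  shows "(\<Prod>k\<in>I. indicator (A k) (s k) :: ennreal) = indicator (Pi\<^sub>E I A) s"
  using assms by (auto simp: indicator_def PiE_def Pi_def extensional_def)

lemma PiM_density:
  assumes fin: "finite I" and "sigma_finite_measure M" and "sigma_finite_measure (density M r)"
    and r[measurable]: "r \<in> borel_measurable M"
  shows "PiM I (\<lambda>_. density M r) = density (PiM I (\<lambda>_. M)) (\<lambda>s. \<Prod>k\<in>I. r (s k))"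
proof -
  interpret D: product_sigma_finite "\<lambda>_. density M r" by (simp add: product_sigma_finite_def assms)
  interpret M: product_sigma_finite "\<lambda>_. M" by (simp add: product_sigma_finite_def assms)
  show ?thesis
  proof (rule D.PiM_eqI[symmetric, OF fin])
    show "sets (density (PiM I (\<lambda>_. M)) (\<lambda>s. \<Prod>k\<in>I. r (s k))) = sets (PiM I (\<lambda>_. density M r))"
      unfolding sets_density by (rule sets_PiM_cong) simp_all
  next
    fix A assume "\<And>i. i \<in> I \<Longrightarrow> A i \<in> sets (density M r)"
    then have A[measurable]: "\<And>i. i \<in> I \<Longrightarrow> A i \<in> sets M" by simp
    have "emeasure (density (PiM I (\<lambda>_. M)) (\<lambda>s. \<Prod>k\<in>I. r (s k))) (Pi\<^sub>E I A)
        = (\<integral>\<^sup>+ s. (\<Prod>k\<in>I. r (s k)) * indicator (Pi\<^sub>E I A) s \<partial>PiM I (\<lambda>_. M))"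
      by (rule emeasure_density) (use fin in \<open>simp_all add: sets_PiM_I_finite\<close>)
    also have "\<dots> = (\<integral>\<^sup>+ s. (\<Prod>k\<in>I. r (s k) * indicator (A k) (s k)) \<partial>PiM I (\<lambda>_. M))"
      by (rule nn_integral_cong) (simp add: prod.distrib prod_indicator_PiE fin space_PiM PiE_def)
    also have "\<dots> = (\<Prod>k\<in>I. \<integral>\<^sup>+ u. r u * indicator (A k) u \<partial>M)"
      by (rule M.product_nn_integral_prod) (use fin in auto)
    also have "\<dots> = (\<Prod>k\<in>I. emeasure (density M r) (A k))"
      by (rule prod.cong) (simp_all add: emeasure_density)
    finally show "emeasure (density (PiM I (\<lambda>_. M)) (\<lambda>s. \<Prod>k\<in>I. r (s k))) (Pi\<^sub>E I A)
        = (\<Prod>k\<in>I. emeasure (density M r) (A k))" .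
  qed
qed

lemma (in product_prob_space) integral_PiM_fun_upd_const:
  fixes f :: "('i \<Rightarrow> 'a) \<Rightarrow> real"
  assumes J: "finite J" "i \<in> J" and f: "integrable (PiM J M) (\<lambda>s. f (s(i := t)))"
  shows "(\<integral>s. f (s(i := t)) \<partial>PiM J M) = (\<integral>y. f (y(i := t)) \<partial>PiM (J - {i}) M)"
proof -
  have J_eq: "J = insert i (J - {i})" using J by auto
  have "(\<integral>s. f (s(i := t)) \<partial>PiM J M) = (\<integral>y. (\<integral>u. f ((y(i := u))(i := t)) \<partial>M i) \<partial>PiM (J - {i}) M)"
    using product_integral_insert[of "J - {i}" i "\<lambda>s. f (s(i := t))"] J f J_eq by simp
  then show ?thesis by (simp add: M.prob_space)
qed

lemma measurable_fun_upd_const: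
  assumes f: "f \<in> borel_measurable (PiM I M)" and I: "I = J \<union> {i}" and t: "t \<in> space (M i)"
  shows "(\<lambda>y. f (y(i := t))) \<in> borel_measurable (PiM J M)"
proof -
  have "(\<lambda>y. y(i := t)) \<in> measurable (PiM J M) (PiM I M)"
    by (rule measurable_fun_upd[OF I]) (use t in simp_all)
  from measurable_compose[OF this f] show ?thesis .
qed

lemma (in prob_space) integrable_unit_valued:
  fixes f :: "'a \<Rightarrow> real"
  assumes "f \<in> borel_measurable M" "\<And>x. 0 \<le> f x \<and> f x \<le> 1"
  shows "integrable M f"
  using assms by (intro integrable_const_bound[where B=1]) auto

lemma nonpos_if_one_minus_mult_le:
  fixes a :: real
  assumes "\<And>t. t \<in> {0<..<1} \<Longrightarrow> (1 - t) * a \<le> t"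
  shows "a \<le> 0"
proof (rule field_le_epsilon)
  fix e :: real assume "0 < e"
  define t where "t = min (1/2) (e/2)"
  have t: "t \<in> {0<..<1}" "t \<le> 1/2" "t \<le> e/2" using \<open>0 < e\<close> by (auto simp: t_def)
  show "a \<le> 0 + e"
  proof (cases "a \<le> 0")
    case False
    then have "a / 2 \<le> (1 - t) * a" using t(2) by (simp add: mult_right_mono)
    then show ?thesis using assms[OF t(1)] t(3) by linarith
  qed (use \<open>0 < e\<close> in simp)
qed

lemma sets_sigM [simp]: "sets (sigM f) = sets borel"
  and space_sigM [simp]: "space (sigM f) = UNIV"
  by (simp_all add: sigM_def)

lemma borel_measurable_PiM_sigM:
  "borel_measurable (PiM I (\<lambda>_. sigM f)) = borel_measurable (PiM I (\<lambda>_. lborel))"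
  by (intro measurable_cong_sets sets_PiM_cong) simp_all

lemma prob_space_sigM:
  assumes "f \<in> borel_measurable borel" "(\<integral>\<^sup>+ t. ennreal (f t) \<partial>lborel) = 1"
  shows "prob_space (sigM f)"
  unfolding sigM_def by (rule prob_spaceI) (use assms in \<open>simp add: emeasure_density\<close>)

lemma product_prob_space_sigM: "prob_space (sigM f) \<Longrightarrow> product_prob_space (\<lambda>_. sigM f)"
  by (simp add: product_prob_space_def product_prob_space_axioms_def product_sigma_finite_def
      prob_space_imp_sigma_finite)

lemma prob_space_profM: "prob_space (sigM f) \<Longrightarrow> prob_space (profM n f)"
  unfolding profM_def by (rule prob_space_PiM)

lemma integrable_PiM_sigM:
  fixes g :: "('i \<Rightarrow> real) \<Rightarrow> real"
  assumes "prob_space (sigM f)" "g \<in> borel_measurable (PiM I (\<lambda>_. lborel))" "\<And>s. 0 \<le> g s \<and> g s \<le> 1"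
  shows "integrable (PiM I (\<lambda>_. sigM f)) g"
proof -
  interpret prob_space "PiM I (\<lambda>_. sigM f)" by (rule prob_space_PiM) (use assms(1) in simp)
  show ?thesis
    by (rule integrable_unit_valued) (use assms(2,3) in \<open>simp_all add: borel_measurable_PiM_sigM\<close>)
qed

lemma AE_PiM_sigM_unit_interval:
  assumes "prob_space (sigM f)" "f \<in> borel_measurable borel" "\<And>t. t \<notin> {0..1} \<Longrightarrow> f t = 0"
    and "finite I"
  shows "AE s in PiM I (\<lambda>_. sigM f). \<forall>k\<in>I. s k \<in> {0<..<1}"
proof -
  interpret product_prob_space "\<lambda>_. sigM f" I
    by (rule product_prob_space_sigM[OF assms(1)])
  have "AE u in lborel. 0 < ennreal (f u) \<longrightarrow> u \<in> {0<..<1}"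
    using AE_lborel_singleton[of 0] AE_lborel_singleton[of 1]
  proof eventually_elim
    case (elim u)
    then show ?case using assms(3)[of u] by (cases "u \<in> {0..1}") auto
  qed
  then have "AE u in sigM f. u \<in> {0<..<1}"
    unfolding sigM_def using assms(2) by (subst AE_density) simp_all
  then have "AE s in PiM I (\<lambda>_. sigM f). s k \<in> {0<..<1}" if "k \<in> I" for k
    by (rule AE_component[OF that])
  then show ?thesis by (rule AE_finite_allI[OF assms(4)])
qed

(* The density of F_{+1} with respect to F_{-1} at signal u, by the normalization
   u = P[omega = +1 | u]; outside (0,1), where F has no mass, it is set to 0. *)
definition odds :: "real \<Rightarrow> real" where
  "odds u = (if u \<in> {0<..<1} then u / (1 - u) else 0)"

lemma odds_nonneg: "0 \<le> odds u"
  by (simp add: odds_def)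

lemma borel_measurable_odds [measurable]: "odds \<in> borel_measurable borel"
  unfolding odds_def by measurable

lemma borel_measurable_odds_sigM [measurable]: "odds \<in> borel_measurable (sigM f)"
  by (subst measurable_cong_sets[OF sets_sigM refl]) (rule borel_measurable_odds)

lemma LR_pos: "s \<in> {..<n} \<rightarrow>\<^sub>E {0<..<1} \<Longrightarrow> 0 < LR n s"
  unfolding LR_def by (intro prod_pos) (auto simp: PiE_iff)

lemma LR_fun_upd:
  assumes "i < n" "\<And>k. k \<in> {..<n} - {i} \<Longrightarrow> y k \<in> {0<..<1}"
  shows "LR n (y(i := t)) = t / (1 - t) * (\<Prod>k\<in>{..<n} - {i}. odds (y k))"
proof -
  have "LR n (y(i := t)) = t / (1 - t) * (\<Prod>k\<in>{..<n} - {i}. y k / (1 - y k))"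
    unfolding LR_def using assms(1) by (simp add: prod.remove[where x=i])
  also have "(\<Prod>k\<in>{..<n} - {i}. y k / (1 - y k)) = (\<Prod>k\<in>{..<n} - {i}. odds (y k))"
    by (rule prod.cong) (use assms(2) in \<open>simp_all add: odds_def\<close>)
  finally show ?thesis .
qed

lemma cond_payoff_full_eq:
  assumes "0 < LR n s"
  shows "cond_payoff_full n s y = (LR n s - 1) / (LR n s + 1) * y"
proof -
  define L where "L = LR n s"
  have "0 < L" using assms by (simp add: L_def)
  then have complement: "1 - L / (1 + L) = 1 / (1 + L)" by (simp add: field_simps)
  have "L / (1 + L) * y - (1 - L / (1 + L)) * y = (L - 1) / (L + 1) * y"
    unfolding complement using \<open>0 < L\<close> by (simp add: diff_divide_distrib[symmetric] algebra_simps)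
  then show ?thesis unfolding cond_payoff_full_def post_full_def L_def .
qed

lemma is_mechanism_eff_mech: "is_mechanism n (eff_mech n)"
proof -
  have "eff_mech n \<in> borel_measurable (PiM {..<n} (\<lambda>_. lborel))"
    unfolding eff_mech_def[abs_def] LR_def by measurable
  then show ?thesis unfolding is_mechanism_def by (simp add: eff_mech_def)
qed

lemma EPIC_eff_mech: "EPIC n (eff_mech n) i"
  unfolding EPIC_def
proof (intro ballI)
  fix s :: "nat \<Rightarrow> real" and t :: real
  assume "s \<in> {..<n} \<rightarrow>\<^sub>E {0<..<1}"
  then have L: "0 < LR n s" by (rule LR_pos)
  have "(LR n s - 1) / (LR n s + 1) * eff_mech n (s(i := t)) \<le> (LR n s - 1) / (LR n s + 1) * eff_mech n s"
  proof (cases "1 \<le> LR n s")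
    case True
    have "eff_mech n (s(i := t)) \<le> eff_mech n s" using True by (simp add: eff_mech_def)
    moreover have "0 \<le> (LR n s - 1) / (LR n s + 1)" using True by simp
    ultimately show ?thesis by (rule mult_left_mono)
  next
    case False
    have "eff_mech n s \<le> eff_mech n (s(i := t))" using False by (simp add: eff_mech_def)
    moreover have "(LR n s - 1) / (LR n s + 1) \<le> 0" using False L by (simp add: divide_nonpos_pos)
    ultimately show ?thesis by (rule mult_left_mono_neg)
  qed
  then show "cond_payoff_full n s (eff_mech n (s(i := t))) \<le> cond_payoff_full n s (eff_mech n s)"
    unfolding cond_payoff_full_eq[OF L] .
qed

lemma EPIC_imp_le_misreport:
  assumes "EPIC n x i" "s \<in> {..<n} \<rightarrow>\<^sub>E {0<..<1}" "LR n s < 1" "t \<in> {0<..<1}"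
  shows "x s \<le> x (s(i := t))"
proof -
  have L: "0 < LR n s" using assms(2) by (rule LR_pos)
  define c where "c = (LR n s - 1) / (LR n s + 1)"
  have "c < 0" unfolding c_def using L assms(3) by (intro divide_neg_pos) simp_all
  have "cond_payoff_full n s (x (s(i := t))) \<le> cond_payoff_full n s (x s)"
    using assms(1,2,4) unfolding EPIC_def by blast
  then have "c * x (s(i := t)) \<le> c * x s"
    unfolding cond_payoff_full_eq[OF L] c_def .
  with \<open>c < 0\<close> show ?thesis by (simp only: mult_le_cancel_left_neg)
qed

definition inefficient_part :: "nat \<Rightarrow> ((nat \<Rightarrow> real) \<Rightarrow> real) \<Rightarrow> (nat \<Rightarrow> real) \<Rightarrow> real" where
  "inefficient_part n x s = (if (\<forall>k\<in>{..<n}. s k \<in> {0<..<1}) \<and> LR n s < 1 then x s else 0)"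

lemma inefficient_part_unit:
  "is_mechanism n x \<Longrightarrow> 0 \<le> inefficient_part n x s \<and> inefficient_part n x s \<le> 1"
  by (simp add: inefficient_part_def is_mechanism_def)

lemma inefficient_part_measurable:
  assumes "is_mechanism n x"
  shows "inefficient_part n x \<in> borel_measurable (PiM {..<n} (\<lambda>_. lborel))"
proof -
  have [measurable]: "x \<in> borel_measurable (PiM {..<n} (\<lambda>_. lborel))"
    using assms by (simp add: is_mechanism_def)
  show ?thesis
    unfolding inefficient_part_def[abs_def] LR_def by measurable
qed

lemma inefficient_part_le_misreport:
  assumes "is_mechanism n x" "EPIC n x i" "s \<in> space (PiM {..<n} M)" "t \<in> {0<..<1}"
  shows "inefficient_part n x s \<le> x (s(i := t))"
proof (cases "(\<forall>k\<in>{..<n}. s k \<in> {0<..<1}) \<and> LR n s < 1")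
  case True
  with assms(3) have "s \<in> {..<n} \<rightarrow>\<^sub>E {0<..<1}"
    by (auto simp: space_PiM PiE_iff)
  with True show ?thesis
    unfolding inefficient_part_def using EPIC_imp_le_misreport[OF assms(2) _ _ assms(4)] by simp
qed (use assms(1) in \<open>auto simp: inefficient_part_def is_mechanism_def\<close>)

lemma eff_mech_fun_upd_le_odds:
  assumes "i < n" "t \<in> {0<..<1}" "\<And>k. k \<in> {..<n} - {i} \<Longrightarrow> y k \<in> {0<..<1}"
  shows "(1 - t) * eff_mech n (y(i := t)) \<le> t * ((\<Prod>k\<in>{..<n} - {i}. odds (y k)) * eff_mech n (y(i := t)))"
proof (cases "1 \<le> LR n (y(i := t))")
  case True
  then have "1 \<le> t / (1 - t) * (\<Prod>k\<in>{..<n} - {i}. odds (y k))"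
    using LR_fun_upd[OF assms(1,3)] by simp
  then have "1 - t \<le> t * (\<Prod>k\<in>{..<n} - {i}. odds (y k))"
    using assms(2) by (simp add: field_simps)
  then show ?thesis using True by (simp add: eff_mech_def)
qed (simp add: eff_mech_def)

lemma mechanism_fun_upd_measurable:
  assumes "is_mechanism n x" "{..<n} = J \<union> {i}"
  shows "(\<lambda>s. x (s(i := t))) \<in> borel_measurable (PiM J (\<lambda>_. lborel))"
  by (rule measurable_fun_upd_const[OF _ assms(2)]) (use assms(1) in \<open>simp_all add: is_mechanism_def\<close>)

lemma integrable_profM_mechanism:
  "prob_space (sigM f) \<Longrightarrow> is_mechanism n x \<Longrightarrow> integrable (profM n f) x"
  unfolding profM_def by (rule integrable_PiM_sigM) (simp_all add: is_mechanism_def)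

lemma integral_profM_fun_upd:
  assumes "prob_space (sigM f)" "is_mechanism n x" "i < n"
  shows "(\<integral>s. x (s(i := t)) \<partial>profM n f) = (\<integral>y. x (y(i := t)) \<partial>PiM ({..<n} - {i}) (\<lambda>_. sigM f))"
proof -
  interpret product_prob_space "\<lambda>_. sigM f" "{..<n}"
    by (rule product_prob_space_sigM[OF assms(1)])
  have "integrable (profM n f) (\<lambda>s. x (s(i := t)))"
    unfolding profM_def
    by (rule integrable_PiM_sigM[OF assms(1) mechanism_fun_upd_measurable[OF assms(2)]])
      (use assms(2,3) in \<open>auto simp: is_mechanism_def\<close>)
  then show ?thesis
    unfolding profM_def by (rule integral_PiM_fun_upd_const[rotated 2]) (use assms(3) in simp_all)
qed

locale normalized_signals =
  fixes fp fm :: "real \<Rightarrow> real"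
  assumes borel_measurable_fp [measurable]: "fp \<in> borel_measurable borel"
    and borel_measurable_fm [measurable]: "fm \<in> borel_measurable borel"
    and fp_nonneg: "\<And>t. 0 \<le> fp t" and fm_nonneg: "\<And>t. 0 \<le> fm t"
    and densities_vanish: "\<And>t. t \<notin> {0..1} \<Longrightarrow> fp t = 0 \<and> fm t = 0"
    and fp_prob: "(\<integral>\<^sup>+ t. ennreal (fp t) \<partial>lborel) = 1"
    and fm_prob: "(\<integral>\<^sup>+ t. ennreal (fm t) \<partial>lborel) = 1"
    and normalized: "AE t in lborel. fp t + fm t > 0 \<longrightarrow> t = fp t / (fp t + fm t)"
begin

lemma prob_space_fp: "prob_space (sigM fp)"
  by (rule prob_space_sigM[OF borel_measurable_fp fp_prob])

lemma prob_space_fm: "prob_space (sigM fm)"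
  by (rule prob_space_sigM[OF borel_measurable_fm fm_prob])

lemma fm_mult_odds_AE: "AE u in lborel. fm u * odds u = fp u"
  using normalized AE_lborel_singleton[of 0] AE_lborel_singleton[of 1]
proof eventually_elim
  case (elim u)
  show ?case
  proof (cases "u \<in> {0<..<1}")
    case False
    with elim have "u \<notin> {0..1}" by auto
    then show ?thesis using densities_vanish[of u] by (simp add: odds_def)
  next
    case u: True
    show ?thesis
    proof (cases "fp u + fm u > 0")
      case True
      with elim have "u * (fp u + fm u) = fp u" by (simp add: field_simps)
      then have "fm u * u = fp u * (1 - u)" by (simp add: algebra_simps)
      then show ?thesis using u by (simp add: odds_def field_simps)
    next
      case False
      then have "fp u = 0" "fm u = 0" using fp_nonneg[of u] fm_nonneg[of u] by linarith+
      then show ?thesis by simp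
    qed
  qed
qed

lemma sigM_fp_eq_density: "sigM fp = density (sigM fm) (\<lambda>u. ennreal (odds u))"
proof -
  have "density (sigM fm) (\<lambda>u. ennreal (odds u)) = density lborel (\<lambda>u. ennreal (fm u) * ennreal (odds u))"
    unfolding sigM_def by (rule density_density_eq) simp_all
  also have "\<dots> = density lborel (\<lambda>u. ennreal (fp u))"
    using fm_mult_odds_AE
    by (intro density_cong) (auto elim!: AE_mp simp: ennreal_mult[symmetric] fm_nonneg odds_nonneg)
  finally show ?thesis by (simp add: sigM_def)
qed

lemma PiM_sigM_fp_eq_density:
  assumes "finite I"
  shows "PiM I (\<lambda>_. sigM fp) = density (PiM I (\<lambda>_. sigM fm)) (\<lambda>s. ennreal (\<Prod>k\<in>I. odds (s k)))"
proof -
  have "PiM I (\<lambda>_. sigM fp) = density (PiM I (\<lambda>_. sigM fm)) (\<lambda>s. \<Prod>k\<in>I. ennreal (odds (s k)))"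
    unfolding sigM_fp_eq_density
    by (intro PiM_density assms)
      (use prob_space_fm prob_space_fp sigM_fp_eq_density prob_space_imp_sigma_finite in auto)
  also have "(\<lambda>s. \<Prod>k\<in>I. ennreal (odds (s k))) = (\<lambda>s. ennreal (\<Prod>k\<in>I. odds (s k)))"
    by (simp add: prod_ennreal odds_nonneg)
  finally show ?thesis .
qed

lemma AE_profM_fp_if_AE_fm:
  assumes "AE s in profM n fm. P s"
  shows "AE s in profM n fp. P s"
proof -
  have "(\<lambda>s. ennreal (\<Prod>k\<in>{..<n}. odds (s k))) \<in> borel_measurable (PiM {..<n} (\<lambda>_. sigM fm))"
    by measurable
  with assms show ?thesis
    unfolding profM_def PiM_sigM_fp_eq_density[OF finite_lessThan]
    by (simp add: AE_density eventually_mono)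
qed

lemma integral_PiM_sigM_fp_eq_odds:
  assumes "finite I" "g \<in> borel_measurable (PiM I (\<lambda>_. lborel))" "\<And>s. 0 \<le> g s \<and> g s \<le> 1"
  shows "integrable (PiM I (\<lambda>_. sigM fm)) (\<lambda>s. (\<Prod>k\<in>I. odds (s k)) * g s)"
    and "(\<integral>s. g s \<partial>PiM I (\<lambda>_. sigM fp)) = (\<integral>s. (\<Prod>k\<in>I. odds (s k)) * g s \<partial>PiM I (\<lambda>_. sigM fm))"
proof -
  have g: "g \<in> borel_measurable (PiM I (\<lambda>_. sigM fm))"
    using assms(2) by (simp add: borel_measurable_PiM_sigM)
  have Q: "(\<lambda>s. \<Prod>k\<in>I. odds (s k)) \<in> borel_measurable (PiM I (\<lambda>_. sigM fm))"
    by measurable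
  have Q_nonneg: "0 \<le> (\<Prod>k\<in>I. odds (s k))" for s
    by (simp add: prod_nonneg odds_nonneg)
  have "integrable (PiM I (\<lambda>_. sigM fp)) g"
    by (rule integrable_PiM_sigM[OF prob_space_fp assms(2,3)])
  then show "integrable (PiM I (\<lambda>_. sigM fm)) (\<lambda>s. (\<Prod>k\<in>I. odds (s k)) * g s)"
    unfolding PiM_sigM_fp_eq_density[OF assms(1)]
    by (subst (asm) integrable_density) (use g Q Q_nonneg in auto)
  show "(\<integral>s. g s \<partial>PiM I (\<lambda>_. sigM fp)) = (\<integral>s. (\<Prod>k\<in>I. odds (s k)) * g s \<partial>PiM I (\<lambda>_. sigM fm))"
    unfolding PiM_sigM_fp_eq_density[OF assms(1)]
    by (subst integral_density) (use g Q Q_nonneg in auto)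
qed

lemma participation_eff_mech:
  assumes i: "i < n"
  shows "participation fp fm n (eff_mech n) i"
  unfolding participation_def interim_payoff_def
proof
  fix t :: real assume t: "t \<in> {0<..<1}"
  define J where "J = {..<n} - {i}"
  define \<phi> where "\<phi> y = eff_mech n (y(i := t))" for y
  define Q where "Q y = (\<Prod>k\<in>J. odds (y k))" for y
  have J: "finite J" "{..<n} = J \<union> {i}" using i by (auto simp: J_def)
  have \<phi>_measurable: "\<phi> \<in> borel_measurable (PiM J (\<lambda>_. lborel))"
    unfolding \<phi>_def by (rule mechanism_fun_upd_measurable[OF is_mechanism_eff_mech J(2)])
  have \<phi>_unit: "0 \<le> \<phi> y \<and> \<phi> y \<le> 1" for y
    by (simp add: \<phi>_def eff_mech_def)
  have "(\<integral>y. (1 - t) * \<phi> y \<partial>PiM J (\<lambda>_. sigM fm)) \<le> (\<integral>y. t * (Q y * \<phi> y) \<partial>PiM J (\<lambda>_. sigM fm))"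
  proof (rule integral_mono_AE)
    have "AE y in PiM J (\<lambda>_. sigM fm). \<forall>k\<in>J. y k \<in> {0<..<1}"
      by (rule AE_PiM_sigM_unit_interval[OF prob_space_fm borel_measurable_fm _ J(1)])
        (use densities_vanish in blast)
    then show "AE y in PiM J (\<lambda>_. sigM fm). (1 - t) * \<phi> y \<le> t * (Q y * \<phi> y)"
    proof eventually_elim
      case (elim y)
      show ?case
        unfolding \<phi>_def Q_def J_def
        by (rule eff_mech_fun_upd_le_odds[OF i t]) (use elim in \<open>simp add: J_def\<close>)
    qed
  qed (use integrable_PiM_sigM[OF prob_space_fm \<phi>_measurable \<phi>_unit]
      integral_PiM_sigM_fp_eq_odds(1)[OF J(1) \<phi>_measurable \<phi>_unit] in \<open>simp_all add: Q_def\<close>)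
  moreover have "(\<integral>y. \<phi> y \<partial>PiM J (\<lambda>_. sigM fp)) = (\<integral>y. Q y * \<phi> y \<partial>PiM J (\<lambda>_. sigM fm))"
    unfolding Q_def by (rule integral_PiM_sigM_fp_eq_odds(2)[OF J(1) \<phi>_measurable \<phi>_unit])
  ultimately have "(1 - t) * (\<integral>y. \<phi> y \<partial>PiM J (\<lambda>_. sigM fm)) \<le> t * (\<integral>y. \<phi> y \<partial>PiM J (\<lambda>_. sigM fp))"
    by simp
  then show "0 \<le> t * (\<integral>s. eff_mech n (s(i := t)) \<partial>profM n fp)
      - (1 - t) * (\<integral>s. eff_mech n (s(i := t)) \<partial>profM n fm)"
    unfolding integral_profM_fun_upd[OF prob_space_fp is_mechanism_eff_mech i]
      integral_profM_fun_upd[OF prob_space_fm is_mechanism_eff_mech i]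
    by (simp add: \<phi>_def J_def)
qed

lemma participation_imp_interim_bound:
  assumes "is_mechanism n x" "participation fp fm n x i" "i < n" "t \<in> {0<..<1}"
  shows "(1 - t) * (\<integral>s. x (s(i := t)) \<partial>profM n fm) \<le> t"
proof -
  interpret prob_space "profM n fp"
    by (rule prob_space_profM[OF prob_space_fp])
  have "{..<n} = {..<n} \<union> {i}" using assms(3) by auto
  from mechanism_fun_upd_measurable[OF assms(1) this]
  have "integrable (profM n fp) (\<lambda>s. x (s(i := t)))"
    unfolding profM_def by (rule integrable_PiM_sigM[OF prob_space_fp])
      (use assms(1) in \<open>simp add: is_mechanism_def\<close>)
  then have "(\<integral>s. x (s(i := t)) \<partial>profM n fp) \<le> 1"
    by (rule integral_le_const) (use assms(1) in \<open>simp add: is_mechanism_def\<close>)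
  then have "t * (\<integral>s. x (s(i := t)) \<partial>profM n fp) \<le> t"
    using assms(4) by (simp add: mult_left_le)
  moreover have "0 \<le> t * (\<integral>s. x (s(i := t)) \<partial>profM n fp) - (1 - t) * (\<integral>s. x (s(i := t)) \<partial>profM n fm)"
    using assms(2,4) unfolding participation_def interim_payoff_def by blast
  ultimately show ?thesis by linarith
qed

lemma integral_inefficient_part_eq_0:
  assumes x: "is_mechanism n x" "participation fp fm n x i" "EPIC n x i" and i: "i < n"
  shows "(\<integral>s. inefficient_part n x s \<partial>profM n fm) = 0"
proof -
  let ?h = "inefficient_part n x"
  have h_integrable: "integrable (profM n fm) ?h"
    unfolding profM_def
    by (rule integrable_PiM_sigM[OF prob_space_fm inefficient_part_measurable[OF x(1)]
          inefficient_part_unit[OF x(1)]])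
  have "(1 - t) * (\<integral>s. ?h s \<partial>profM n fm) \<le> t" if t: "t \<in> {0<..<1}" for t
  proof -
    have "integrable (profM n fm) (\<lambda>s. x (s(i := t)))"
      unfolding profM_def
      by (rule integrable_PiM_sigM[OF prob_space_fm mechanism_fun_upd_measurable[OF x(1)]])
        (use i x(1) in \<open>auto simp: is_mechanism_def\<close>)
    with h_integrable have "(\<integral>s. ?h s \<partial>profM n fm) \<le> (\<integral>s. x (s(i := t)) \<partial>profM n fm)"
      by (rule integral_mono) (use inefficient_part_le_misreport[OF x(1,3) _ t] in \<open>simp add: profM_def\<close>)
    then have "(1 - t) * (\<integral>s. ?h s \<partial>profM n fm) \<le> (1 - t) * (\<integral>s. x (s(i := t)) \<partial>profM n fm)"
      using t by (intro mult_left_mono) auto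
    with participation_imp_interim_bound[OF x(1,2) i t] show ?thesis by linarith
  qed
  then have "(\<integral>s. ?h s \<partial>profM n fm) \<le> 0"
    by (rule nonpos_if_one_minus_mult_le)
  moreover have "0 \<le> (\<integral>s. ?h s \<partial>profM n fm)"
    using inefficient_part_unit[OF x(1)] by (simp add: integral_nonneg)
  ultimately show ?thesis by linarith
qed

lemma AE_le_eff_mech:
  assumes x: "is_mechanism n x" "participation fp fm n x i" "EPIC n x i" and i: "i < n"
  shows "AE s in profM n fm. x s \<le> eff_mech n s"
proof -
  have "integrable (profM n fm) (inefficient_part n x)"
    unfolding profM_def
    by (rule integrable_PiM_sigM[OF prob_space_fm inefficient_part_measurable[OF x(1)]
          inefficient_part_unit[OF x(1)]])
  then have "AE s in profM n fm. inefficient_part n x s = 0"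
    using integral_inefficient_part_eq_0[OF x i] inefficient_part_unit[OF x(1)]
    by (subst integral_nonneg_eq_0_iff_AE[symmetric]) auto
  moreover have "AE s in profM n fm. \<forall>k\<in>{..<n}. s k \<in> {0<..<1}"
    unfolding profM_def
    by (rule AE_PiM_sigM_unit_interval[OF prob_space_fm borel_measurable_fm _ finite_lessThan])
      (use densities_vanish in blast)
  ultimately show ?thesis
    by eventually_elim (use x(1) in \<open>auto simp: inefficient_part_def eff_mech_def is_mechanism_def\<close>)
qed

lemma ex_ante_alloc_mono:
  assumes "is_mechanism n x" "is_mechanism n y" "AE s in profM n fm. x s \<le> y s"
  shows "ex_ante_alloc fp fm n x \<le> ex_ante_alloc fp fm n y"
proof -
  have "(\<integral>s. x s \<partial>profM n f) \<le> (\<integral>s. y s \<partial>profM n f)"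
    if "prob_space (sigM f)" "AE s in profM n f. x s \<le> y s" for f
    using that by (intro integral_mono_AE integrable_profM_mechanism assms(1,2))
  from this[OF prob_space_fp AE_profM_fp_if_AE_fm[OF assms(3)]] this[OF prob_space_fm assms(3)]
  show ?thesis unfolding ex_ante_alloc_def by simp
qed

lemma ex_ante_alloc_eq_imp_AE_eq:
  assumes "is_mechanism n x" "is_mechanism n y" "AE s in profM n fm. x s \<le> y s"
    and "ex_ante_alloc fp fm n x = ex_ante_alloc fp fm n y"
  shows "(AE s in profM n fp. x s = y s) \<and> (AE s in profM n fm. x s = y s)"
proof -
  have fp_le: "AE s in profM n fp. x s \<le> y s"
    by (rule AE_profM_fp_if_AE_fm[OF assms(3)])
  have integrable: "integrable (profM n fp) x" "integrable (profM n fp) y"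
    "integrable (profM n fm) x" "integrable (profM n fm) y"
    by (intro integrable_profM_mechanism prob_space_fp prob_space_fm assms(1,2))+
  have "(\<integral>s. x s \<partial>profM n fp) \<le> (\<integral>s. y s \<partial>profM n fp)" "(\<integral>s. x s \<partial>profM n fm) \<le> (\<integral>s. y s \<partial>profM n fm)"
    using integrable fp_le assms(3) by (auto intro: integral_mono_AE)
  with assms(4) have "(\<integral>s. x s \<partial>profM n fp) = (\<integral>s. y s \<partial>profM n fp)"
    "(\<integral>s. x s \<partial>profM n fm) = (\<integral>s. y s \<partial>profM n fm)"
    unfolding ex_ante_alloc_def by linarith+
  with integrable fp_le assms(3) show ?thesis
    using sigma_finite_measure.integral_eq_mono_AE_eq_AE prob_space_imp_sigma_finite
      prob_space_profM prob_space_fp prob_space_fm by metis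
qed

end

theorem proposition2:
  fixes fp fm :: "real \<Rightarrow> real" and n i :: nat
  assumes n2: "n \<ge> 2" and i: "i < n"
    and meas_p: "fp \<in> borel_measurable borel" and meas_m: "fm \<in> borel_measurable borel"
    and nonneg_p: "\<forall>t. fp t \<ge> 0" and nonneg_m: "\<forall>t. fm t \<ge> 0"
    and on01: "\<forall>t. t \<notin> {0..1} \<longrightarrow> fp t = 0 \<and> fm t = 0"
    and prob_p: "(\<integral>\<^sup>+ t. ennreal (fp t) \<partial>lborel) = 1"
    and prob_m: "(\<integral>\<^sup>+ t. ennreal (fm t) \<partial>lborel) = 1"
    and mutual_ac: "AE t in lborel. (fp t > 0 \<longleftrightarrow> fm t > 0)"
    and normalized: "AE t in lborel. fp t + fm t > 0 \<longrightarrow> t = fp t / (fp t + fm t)"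
    and support: "\<forall>a b. 0 \<le> a \<and> a < b \<and> b \<le> 1 \<longrightarrow>
                    (\<integral>\<^sup>+ t\<in>{a<..<b}. ennreal ((fp t + fm t) / 2) \<partial>lborel) > 0"
  shows "is_mechanism n (eff_mech n) \<and> participation fp fm n (eff_mech n) i \<and> EPIC n (eff_mech n) i
         \<and> (\<forall>x. is_mechanism n x \<and> participation fp fm n x i \<and> EPIC n x i \<longrightarrow>
               ex_ante_alloc fp fm n x \<le> ex_ante_alloc fp fm n (eff_mech n)
             \<and> (ex_ante_alloc fp fm n x = ex_ante_alloc fp fm n (eff_mech n) \<longrightarrow>
                  (AE s in profM n fp. x s = eff_mech n s) \<and> (AE s in profM n fm. x s = eff_mech n s)))"
proof -
  interpret normalized_signals fp fm
    by unfold_locales (use meas_p meas_m nonneg_p nonneg_m on01 prob_p prob_m normalized in auto)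
  have "ex_ante_alloc fp fm n x \<le> ex_ante_alloc fp fm n (eff_mech n)
      \<and> (ex_ante_alloc fp fm n x = ex_ante_alloc fp fm n (eff_mech n) \<longrightarrow>
           (AE s in profM n fp. x s = eff_mech n s) \<and> (AE s in profM n fm. x s = eff_mech n s))"
    if x: "is_mechanism n x" "participation fp fm n x i" "EPIC n x i" for x
  proof -
    have dominated: "AE s in profM n fm. x s \<le> eff_mech n s"
      by (rule AE_le_eff_mech[OF x i])
    show ?thesis
      using ex_ante_alloc_mono[OF x(1) is_mechanism_eff_mech dominated]
        ex_ante_alloc_eq_imp_AE_eq[OF x(1) is_mechanism_eff_mech dominated] by blast
  qed
  then show ?thesis
    using is_mechanism_eff_mech participation_eff_mech[OF i] EPIC_eff_mech by blast
qed

end
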